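(* Let $M$ be a regular, residually finite monoid. Then the (right) action of $M$ on its $\mathcal{L}$-classes and the left action of $M$ on its $\mathcal{R}$-classes are both residually finite. Equivalently, for any $s,t\in M$ with $(s,t)\notin\mathcal{L}$ there is a right congruence $\rho$ of finite index on $M$ with $\mathcal{L}\subseteq\rho$ and $(s,t)\notin\rho$, and dually for $\mathcal{R}$ with left congruences.
   Context: A monoid $M$ is regular if for every $x\in M$ there is $y\in M$ with $xyx=x$. It is residually finite if any two distinct elements are separated by a homomorphism to a finite monoid. Green's relations: $x\mathcal{R}y$ iff $xM=yM$, $x\mathcal{L}y$ iff $Mx=My$. $\mathcal{L}$ is a right congruence, so $M$ acts on the right on $M/\mathcal{L}$ by $L_x\cdot m=L_{xm}$; dually $M$ acts on the left on $M/\mathcal{R}$. A right action of $M$ on a set $X$ is residually finite if for any distinct $x,y\in X$ there is an action of $M$ on a finite set $Y$ and a map $f:X\to Y$ with $f(xm)=f(x)m$ for all $x,m$ and $f(x)\neq f(y)$ (dually for left actions). A right congruence has finite index if it has finitely many classes. *)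

theory Defs
  imports "HOL-Algebra.Group"
begin

definition regular_monoid :: "('a, 'b) monoid_scheme \<Rightarrow> bool" where
  "regular_monoid M \<longleftrightarrow>
     (\<forall>x\<in>carrier M. \<exists>y\<in>carrier M. x \<otimes>\<^bsub>M\<^esub> y \<otimes>\<^bsub>M\<^esub> x = x)"

definition monoid_hom :: "('a, 'b) monoid_scheme \<Rightarrow> ('c, 'd) monoid_scheme \<Rightarrow> ('a \<Rightarrow> 'c) set" where
  "monoid_hom M N = {f. f \<in> hom M N \<and> f \<one>\<^bsub>M\<^esub> = \<one>\<^bsub>N\<^esub>}"

text \<open>Residual finiteness. Every finite monoid is isomorphic to one whose carrier is a
  set of natural numbers, so it suffices to range over finite monoids of type nat monoid.\<close>
definition residually_finite :: "('a, 'b) monoid_scheme \<Rightarrow> bool" where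
  "residually_finite M \<longleftrightarrow>
     (\<forall>x\<in>carrier M. \<forall>y\<in>carrier M. x \<noteq> y \<longrightarrow>
        (\<exists>(N :: nat monoid) f. monoid N \<and> finite (carrier N) \<and> f \<in> monoid_hom M N \<and> f x \<noteq> f y))"

definition greenL :: "('a, 'b) monoid_scheme \<Rightarrow> ('a \<times> 'a) set" where
  "greenL M = {(x, y). x \<in> carrier M \<and> y \<in> carrier M \<and>
      (\<lambda>m. m \<otimes>\<^bsub>M\<^esub> x) ` carrier M = (\<lambda>m. m \<otimes>\<^bsub>M\<^esub> y) ` carrier M}"

definition greenR :: "('a, 'b) monoid_scheme \<Rightarrow> ('a \<times> 'a) set" where
  "greenR M = {(x, y). x \<in> carrier M \<and> y \<in> carrier M \<and>
      (\<lambda>m. x \<otimes>\<^bsub>M\<^esub> m) ` carrier M = (\<lambda>m. y \<otimes>\<^bsub>M\<^esub> m) ` carrier M}"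

definition L_act :: "('a, 'b) monoid_scheme \<Rightarrow> 'a set \<Rightarrow> 'a \<Rightarrow> 'a set" where
  "L_act M C m = greenL M `` {(SOME x. x \<in> C) \<otimes>\<^bsub>M\<^esub> m}"

definition R_act :: "('a, 'b) monoid_scheme \<Rightarrow> 'a \<Rightarrow> 'a set \<Rightarrow> 'a set" where
  "R_act M m C = greenR M `` {m \<otimes>\<^bsub>M\<^esub> (SOME x. x \<in> C)}"

definition right_action :: "('a, 'b) monoid_scheme \<Rightarrow> 'y set \<Rightarrow> ('y \<Rightarrow> 'a \<Rightarrow> 'y) \<Rightarrow> bool" where
  "right_action M Y act \<longleftrightarrow>
     (\<forall>y\<in>Y. \<forall>m\<in>carrier M. act y m \<in> Y) \<and>
     (\<forall>y\<in>Y. act y \<one>\<^bsub>M\<^esub> = y) \<and>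
     (\<forall>y\<in>Y. \<forall>m\<in>carrier M. \<forall>n\<in>carrier M. act (act y m) n = act y (m \<otimes>\<^bsub>M\<^esub> n))"

definition left_action :: "('a, 'b) monoid_scheme \<Rightarrow> 'y set \<Rightarrow> ('a \<Rightarrow> 'y \<Rightarrow> 'y) \<Rightarrow> bool" where
  "left_action M Y act \<longleftrightarrow>
     (\<forall>y\<in>Y. \<forall>m\<in>carrier M. act m y \<in> Y) \<and>
     (\<forall>y\<in>Y. act \<one>\<^bsub>M\<^esub> y = y) \<and>
     (\<forall>y\<in>Y. \<forall>m\<in>carrier M. \<forall>n\<in>carrier M. act n (act m y) = act (n \<otimes>\<^bsub>M\<^esub> m) y)"

text \<open>Residual finiteness of an action on X (finite targets taken with elements in nat,
  which is no loss of generality since any finite set is in bijection with one of those).\<close>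
definition right_action_resfin :: "('a, 'b) monoid_scheme \<Rightarrow> 'x set \<Rightarrow> ('x \<Rightarrow> 'a \<Rightarrow> 'x) \<Rightarrow> bool" where
  "right_action_resfin M X act \<longleftrightarrow>
     (\<forall>x\<in>X. \<forall>y\<in>X. x \<noteq> y \<longrightarrow>
        (\<exists>(Y :: nat set) (b :: nat \<Rightarrow> 'a \<Rightarrow> nat) f.
           finite Y \<and> right_action M Y b \<and> f \<in> X \<rightarrow> Y \<and>
           (\<forall>z\<in>X. \<forall>m\<in>carrier M. f (act z m) = b (f z) m) \<and> f x \<noteq> f y))"

definition left_action_resfin :: "('a, 'b) monoid_scheme \<Rightarrow> 'x set \<Rightarrow> ('a \<Rightarrow> 'x \<Rightarrow> 'x) \<Rightarrow> bool" where
  "left_action_resfin M X act \<longleftrightarrow>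
     (\<forall>x\<in>X. \<forall>y\<in>X. x \<noteq> y \<longrightarrow>
        (\<exists>(Y :: nat set) (b :: 'a \<Rightarrow> nat \<Rightarrow> nat) f.
           finite Y \<and> left_action M Y b \<and> f \<in> X \<rightarrow> Y \<and>
           (\<forall>z\<in>X. \<forall>m\<in>carrier M. f (act m z) = b m (f z)) \<and> f x \<noteq> f y))"

definition right_congruence :: "('a, 'b) monoid_scheme \<Rightarrow> ('a \<times> 'a) set \<Rightarrow> bool" where
  "right_congruence M \<rho> \<longleftrightarrow> equiv (carrier M) \<rho> \<and>
     (\<forall>s t m. (s, t) \<in> \<rho> \<longrightarrow> m \<in> carrier M \<longrightarrow> (s \<otimes>\<^bsub>M\<^esub> m, t \<otimes>\<^bsub>M\<^esub> m) \<in> \<rho>)"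

definition left_congruence :: "('a, 'b) monoid_scheme \<Rightarrow> ('a \<times> 'a) set \<Rightarrow> bool" where
  "left_congruence M \<rho> \<longleftrightarrow> equiv (carrier M) \<rho> \<and>
     (\<forall>s t m. (s, t) \<in> \<rho> \<longrightarrow> m \<in> carrier M \<longrightarrow> (m \<otimes>\<^bsub>M\<^esub> s, m \<otimes>\<^bsub>M\<^esub> t) \<in> \<rho>)"

definition finite_index :: "('a, 'b) monoid_scheme \<Rightarrow> ('a \<times> 'a) set \<Rightarrow> bool" where
  "finite_index M \<rho> \<longleftrightarrow> finite (carrier M // \<rho>)"

end

theory Submission
  imports Defs
begin

(*
  Let M be regular and residually finite, and let phi : M -> N be a
  homomorphism to a finite monoid.  The map  G x = phi(Mx)  (image of the principal left
  ideal of x) is constant on L-classes and right-equivariant: G(xm) = G(x) phi(m).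
  Hence the L-classes map equivariantly into the finite right M-set of subsets of N,
  and the kernel of G is a finite-index right congruence containing L.
  Regularity makes these maps separating: if s is not in Mt, pick t' with tt't = t;
  then s <> st't, and a homomorphism phi separating s from st't also separates G s from
  G t, because phi s in G t would force phi(st't) = phi s.  The R-statements follow by applying these to the
  opposite monoid, whose L-relation is the R-relation of M.
*)

lemma monoid_hom_mult:
  "f \<in> monoid_hom M N \<Longrightarrow> x \<in> carrier M \<Longrightarrow> y \<in> carrier M \<Longrightarrow>
   f (x \<otimes>\<^bsub>M\<^esub> y) = f x \<otimes>\<^bsub>N\<^esub> f y"
  by (auto simp: monoid_hom_def hom_def)

lemma monoid_hom_closed: "f \<in> monoid_hom M N \<Longrightarrow> x \<in> carrier M \<Longrightarrow> f x \<in> carrier N"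
  by (auto simp: monoid_hom_def hom_def)

lemma monoid_hom_one: "f \<in> monoid_hom M N \<Longrightarrow> f \<one>\<^bsub>M\<^esub> = \<one>\<^bsub>N\<^esub>"
  by (simp add: monoid_hom_def)

definition left_ideal :: "('a, 'b) monoid_scheme \<Rightarrow> 'a \<Rightarrow> 'a set" where
  "left_ideal M x = (\<lambda>m. m \<otimes>\<^bsub>M\<^esub> x) ` carrier M"

lemma greenL_iff:
  "(x, y) \<in> greenL M \<longleftrightarrow> x \<in> carrier M \<and> y \<in> carrier M \<and> left_ideal M x = left_ideal M y"
  by (simp add: greenL_def left_ideal_def)

lemma equiv_greenL: "equiv (carrier M) (greenL M)"
  by (auto simp: equiv_def refl_on_def sym_def trans_def greenL_def)

lemma left_ideal_subset_carrier: "monoid M \<Longrightarrow> x \<in> carrier M \<Longrightarrow> left_ideal M x \<subseteq> carrier M"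
  by (auto simp: left_ideal_def monoid.m_closed)

lemma left_ideal_mono:
  assumes "monoid M" "y \<in> carrier M" "x \<in> left_ideal M y"
  shows "left_ideal M x \<subseteq> left_ideal M y"
proof
  fix z assume "z \<in> left_ideal M x"
  then obtain m where m: "m \<in> carrier M" "z = m \<otimes>\<^bsub>M\<^esub> x" by (auto simp: left_ideal_def)
  obtain a where a: "a \<in> carrier M" "x = a \<otimes>\<^bsub>M\<^esub> y" using assms(3) by (auto simp: left_ideal_def)
  have "z = (m \<otimes>\<^bsub>M\<^esub> a) \<otimes>\<^bsub>M\<^esub> y" using m a assms by (simp add: monoid.m_assoc)
  then show "z \<in> left_ideal M y" using m a assms by (auto simp: left_ideal_def monoid.m_closed)
qed

lemma not_greenL_outside_ideal:
  assumes "monoid M" "x \<in> carrier M" "y \<in> carrier M" "(x, y) \<notin> greenL M"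
  shows "x \<notin> left_ideal M y \<or> y \<notin> left_ideal M x"
  using assms left_ideal_mono[OF assms(1)] by (auto simp: greenL_iff)

definition ideal_image ::
    "('a, 'b) monoid_scheme \<Rightarrow> ('a \<Rightarrow> 'c) \<Rightarrow> 'a \<Rightarrow> 'c set" where
  "ideal_image M \<phi> x = \<phi> ` left_ideal M x"

lemma ideal_image_greenL: "(x, y) \<in> greenL M \<Longrightarrow> ideal_image M \<phi> x = ideal_image M \<phi> y"
  by (simp add: greenL_iff ideal_image_def)

lemma ideal_image_subset:
  "monoid M \<Longrightarrow> \<phi> \<in> monoid_hom M N \<Longrightarrow> x \<in> carrier M \<Longrightarrow> ideal_image M \<phi> x \<subseteq> carrier N"
  using left_ideal_subset_carrier monoid_hom_closed by (fastforce simp: ideal_image_def)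

lemma ideal_image_self:
  assumes "monoid M" "x \<in> carrier M"
  shows "\<phi> x \<in> ideal_image M \<phi> x"
proof -
  have "x = \<one>\<^bsub>M\<^esub> \<otimes>\<^bsub>M\<^esub> x" using assms by (simp add: monoid.l_one)
  then have "x \<in> left_ideal M x"
    unfolding left_ideal_def using assms by (blast intro: monoid.one_closed)
  then show ?thesis by (simp add: ideal_image_def)
qed

definition translate :: "('c, 'd) monoid_scheme \<Rightarrow> ('a \<Rightarrow> 'c) \<Rightarrow> 'c set \<Rightarrow> 'a \<Rightarrow> 'c set" where
  "translate N \<phi> S m = (\<lambda>a. a \<otimes>\<^bsub>N\<^esub> \<phi> m) ` S"

lemma translate_right_action:
  assumes "monoid M" "monoid N" "\<phi> \<in> monoid_hom M N"
  shows "right_action M (Pow (carrier N)) (translate N \<phi>)"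
  unfolding right_action_def translate_def
proof (intro conjI ballI)
  fix S m n assume S: "S \<in> Pow (carrier N)" and mn: "m \<in> carrier M" "n \<in> carrier M"
  show "(\<lambda>a. a \<otimes>\<^bsub>N\<^esub> \<phi> m) ` S \<in> Pow (carrier N)"
    using S mn assms by (auto intro: monoid.m_closed monoid_hom_closed)
  show "(\<lambda>a. a \<otimes>\<^bsub>N\<^esub> \<phi> n) ` (\<lambda>a. a \<otimes>\<^bsub>N\<^esub> \<phi> m) ` S = (\<lambda>a. a \<otimes>\<^bsub>N\<^esub> \<phi> (m \<otimes>\<^bsub>M\<^esub> n)) ` S"
    using S mn assms unfolding image_image
    by (intro image_cong) (auto simp: monoid_hom_mult monoid_hom_closed monoid.m_assoc)
next
  fix S assume "S \<in> Pow (carrier N)"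
  then have "\<And>a. a \<in> S \<Longrightarrow> a \<otimes>\<^bsub>N\<^esub> \<phi> \<one>\<^bsub>M\<^esub> = a"
    using assms by (auto simp: monoid_hom_one monoid.r_one)
  then show "(\<lambda>a. a \<otimes>\<^bsub>N\<^esub> \<phi> \<one>\<^bsub>M\<^esub>) ` S = S" by simp
qed

lemma ideal_image_mult:
  assumes "monoid M" "monoid N" "\<phi> \<in> monoid_hom M N" "x \<in> carrier M" "m \<in> carrier M"
  shows "ideal_image M \<phi> (x \<otimes>\<^bsub>M\<^esub> m) = translate N \<phi> (ideal_image M \<phi> x) m"
proof -
  have "\<phi> (k \<otimes>\<^bsub>M\<^esub> (x \<otimes>\<^bsub>M\<^esub> m)) = \<phi> (k \<otimes>\<^bsub>M\<^esub> x) \<otimes>\<^bsub>N\<^esub> \<phi> m" if "k \<in> carrier M" for k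
    using assms that by (simp add: monoid_hom_mult monoid_hom_closed monoid.m_assoc monoid.m_closed)
  then show ?thesis
    unfolding ideal_image_def translate_def left_ideal_def image_image
    by (rule image_cong[OF refl])
qed

text \<open>Where regularity enters: if \<open>tt't = t\<close> and \<open>\<phi> s \<in> \<phi>(Mt)\<close>, then \<open>\<phi>(st't) = \<phi> s\<close>.\<close>

lemma ideal_image_member_fixed:
  assumes "monoid M" "monoid N" "\<phi> \<in> monoid_hom M N"
    and st: "s \<in> carrier M" "t \<in> carrier M" "t' \<in> carrier M"
    and idem: "t \<otimes>\<^bsub>M\<^esub> t' \<otimes>\<^bsub>M\<^esub> t = t"
    and mem: "\<phi> s \<in> ideal_image M \<phi> t"
  shows "\<phi> (s \<otimes>\<^bsub>M\<^esub> t' \<otimes>\<^bsub>M\<^esub> t) = \<phi> s"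
proof -
  obtain a where a: "a \<in> carrier M" "\<phi> s = \<phi> (a \<otimes>\<^bsub>M\<^esub> t)"
    using mem by (auto simp: ideal_image_def left_ideal_def)
  have "\<phi> (s \<otimes>\<^bsub>M\<^esub> t' \<otimes>\<^bsub>M\<^esub> t) = \<phi> s \<otimes>\<^bsub>N\<^esub> \<phi> t' \<otimes>\<^bsub>N\<^esub> \<phi> t"
    using assms by (simp add: monoid_hom_mult monoid.m_closed)
  also have "\<dots> = \<phi> a \<otimes>\<^bsub>N\<^esub> (\<phi> t \<otimes>\<^bsub>N\<^esub> \<phi> t' \<otimes>\<^bsub>N\<^esub> \<phi> t)"
    using assms a by (simp add: monoid_hom_mult monoid_hom_closed monoid.m_assoc monoid.m_closed)
  also have "\<phi> t \<otimes>\<^bsub>N\<^esub> \<phi> t' \<otimes>\<^bsub>N\<^esub> \<phi> t = \<phi> t"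
    using assms by (metis monoid_hom_mult monoid.m_closed)
  finally show ?thesis using assms a by (simp add: monoid_hom_mult)
qed

lemma separate_outside_ideal:
  assumes M: "monoid M" "regular_monoid M" "residually_finite M"
    and st: "s \<in> carrier M" "t \<in> carrier M" and outside: "s \<notin> left_ideal M t"
  shows "\<exists>(N :: nat monoid) \<phi>. monoid N \<and> finite (carrier N) \<and> \<phi> \<in> monoid_hom M N
          \<and> ideal_image M \<phi> s \<noteq> ideal_image M \<phi> t"
proof -
  obtain t' where t': "t' \<in> carrier M" "t \<otimes>\<^bsub>M\<^esub> t' \<otimes>\<^bsub>M\<^esub> t = t"
    using M(2) st unfolding regular_monoid_def by blast
  have "s \<otimes>\<^bsub>M\<^esub> t' \<otimes>\<^bsub>M\<^esub> t \<in> left_ideal M t"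
    using M st t' by (auto simp: left_ideal_def monoid.m_closed)
  then have "s \<noteq> s \<otimes>\<^bsub>M\<^esub> t' \<otimes>\<^bsub>M\<^esub> t" and "s \<otimes>\<^bsub>M\<^esub> t' \<otimes>\<^bsub>M\<^esub> t \<in> carrier M"
    using outside left_ideal_subset_carrier[OF M(1) st(2)] by auto
  then obtain N :: "nat monoid" and \<phi> where N: "monoid N" "finite (carrier N)" "\<phi> \<in> monoid_hom M N"
    and differ: "\<phi> s \<noteq> \<phi> (s \<otimes>\<^bsub>M\<^esub> t' \<otimes>\<^bsub>M\<^esub> t)"
    using M(3) st unfolding residually_finite_def by blast
  have "\<phi> s \<notin> ideal_image M \<phi> t"
    using ideal_image_member_fixed[OF M(1) N(1,3) st t'] differ by auto
  then have "ideal_image M \<phi> s \<noteq> ideal_image M \<phi> t"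
    using ideal_image_self[OF M(1) st(1)] by auto
  then show ?thesis using N by blast
qed

lemma separate_non_greenL:
  assumes M: "monoid M" "regular_monoid M" "residually_finite M"
    and st: "s \<in> carrier M" "t \<in> carrier M" "(s, t) \<notin> greenL M"
  shows "\<exists>(N :: nat monoid) \<phi>. monoid N \<and> finite (carrier N) \<and> \<phi> \<in> monoid_hom M N
          \<and> ideal_image M \<phi> s \<noteq> ideal_image M \<phi> t"
  using not_greenL_outside_ideal[OF M(1) st] separate_outside_ideal[OF M st(1,2)]
    separate_outside_ideal[OF M st(2,1)] by metis

definition map_kernel :: "('a, 'b) monoid_scheme \<Rightarrow> ('a \<Rightarrow> 'y) \<Rightarrow> ('a \<times> 'a) set" where
  "map_kernel M G = {(x, y). x \<in> carrier M \<and> y \<in> carrier M \<and> G x = G y}"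

lemma map_kernel_right_congruence:
  assumes "monoid M"
    and equivariant: "\<And>x m. x \<in> carrier M \<Longrightarrow> m \<in> carrier M \<Longrightarrow> G (x \<otimes>\<^bsub>M\<^esub> m) = act (G x) m"
  shows "right_congruence M (map_kernel M G)"
proof -
  have "equiv (carrier M) (map_kernel M G)"
    by (rule equivI) (auto simp: map_kernel_def refl_on_def sym_def trans_def)
  moreover have "(s \<otimes>\<^bsub>M\<^esub> m, t \<otimes>\<^bsub>M\<^esub> m) \<in> map_kernel M G"
    if "(s, t) \<in> map_kernel M G" "m \<in> carrier M" for s t m
    using that by (simp add: map_kernel_def equivariant monoid.m_closed[OF assms(1)])
  ultimately show ?thesis by (simp add: right_congruence_def)
qed

lemma map_kernel_finite_index:
  assumes "G ` carrier M \<subseteq> Y" "finite Y"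
  shows "finite_index M (map_kernel M G)"
  unfolding finite_index_def
proof (rule finite_subset)
  show "carrier M // map_kernel M G \<subseteq> (\<lambda>v. {y \<in> carrier M. G y = v}) ` Y"
  proof
    fix C assume "C \<in> carrier M // map_kernel M G"
    then obtain x where x: "x \<in> carrier M" "C = map_kernel M G `` {x}" by (rule quotientE)
    then have "C = {y \<in> carrier M. G y = G x}" by (auto simp: map_kernel_def)
    then show "C \<in> (\<lambda>v. {y \<in> carrier M. G y = v}) ` Y" using x assms(1) by blast
  qed
  show "finite ((\<lambda>v. {y \<in> carrier M. G y = v}) ` Y)" using assms(2) by simp
qed

lemma right_action_resfin_intro:
  fixes M :: "('a, 'b) monoid_scheme" and act :: "'x \<Rightarrow> 'a \<Rightarrow> 'x"
  assumes separate: "\<And>x y. x \<in> X \<Longrightarrow> y \<in> X \<Longrightarrow> x \<noteq> y \<Longrightarrow>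
     \<exists>(Y :: 'y set) b f. finite Y \<and> right_action M Y b \<and> f \<in> X \<rightarrow> Y \<and>
        (\<forall>z\<in>X. \<forall>m\<in>carrier M. f (act z m) = b (f z) m) \<and> f x \<noteq> f y"
  shows "right_action_resfin M X act"
  unfolding right_action_resfin_def
proof (intro ballI impI)
  fix x y assume xy: "x \<in> X" "y \<in> X" "x \<noteq> y"
  obtain Y :: "'y set" and b f where Y: "finite Y" "right_action M Y b" "f \<in> X \<rightarrow> Y"
    and equivariant: "\<forall>z\<in>X. \<forall>m\<in>carrier M. f (act z m) = b (f z) m" and differ: "f x \<noteq> f y"
    using separate[OF xy] by (elim exE conjE)
  obtain enc :: "'y \<Rightarrow> nat" and n where enc: "enc ` Y = {i. i < n}" "inj_on enc Y"
    using finite_imp_inj_to_nat_seg[OF Y(1)] by blast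
  define b' where "b' = (\<lambda>i m. enc (b (inv_into Y enc i) m))"
  have b'_enc: "b' (enc v) m = enc (b v m)" if "v \<in> Y" for v m
    using that enc(2) by (simp add: b'_def)
  have "right_action M (enc ` Y) b'"
    unfolding right_action_def
  proof (intro conjI ballI)
    fix i m n assume "i \<in> enc ` Y" "m \<in> carrier M" "n \<in> carrier M"
    then obtain v where v: "v \<in> Y" "i = enc v" by blast
    have bv: "b v m \<in> Y" using Y(2) v(1) \<open>m \<in> carrier M\<close> by (simp add: right_action_def)
    show "b' i m \<in> enc ` Y" using bv v by (simp add: b'_enc)
    show "b' (b' i m) n = b' i (m \<otimes>\<^bsub>M\<^esub> n)"
      using Y(2) v bv \<open>m \<in> carrier M\<close> \<open>n \<in> carrier M\<close> by (simp add: b'_enc right_action_def)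
  next
    fix i assume "i \<in> enc ` Y"
    then obtain v where v: "v \<in> Y" "i = enc v" by blast
    then show "b' i \<one>\<^bsub>M\<^esub> = i" using Y(2) by (simp add: b'_enc right_action_def)
  qed
  moreover have "(enc \<circ> f) \<in> X \<rightarrow> enc ` Y" using Y(3) by auto
  moreover have "\<forall>z\<in>X. \<forall>m\<in>carrier M. (enc \<circ> f) (act z m) = b' ((enc \<circ> f) z) m"
    using equivariant Y(3) by (simp add: b'_enc Pi_iff)
  moreover have "(enc \<circ> f) x \<noteq> (enc \<circ> f) y"
    using differ Y(3) xy(1,2) enc(2) by (simp add: Pi_iff inj_on_eq_iff)
  moreover have "finite (enc ` Y)" using Y(1) by simp
  ultimately show "\<exists>(Y' :: nat set) (b :: nat \<Rightarrow> 'a \<Rightarrow> nat) f'. finite Y' \<and> right_action M Y' b \<and>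
      f' \<in> X \<rightarrow> Y' \<and> (\<forall>z\<in>X. \<forall>m\<in>carrier M. f' (act z m) = b (f' z) m) \<and> f' x \<noteq> f' y"
    by (intro exI[of _ "enc ` Y"] exI[of _ b'] exI[of _ "enc \<circ> f"] conjI)
qed

lemma quotient_rep:
  assumes "equiv A r" "C \<in> A // r"
  shows "(SOME x. x \<in> C) \<in> A" "C = r `` {SOME x. x \<in> C}"
proof -
  obtain x where x: "x \<in> A" "C = r `` {x}" using assms(2) by (rule quotientE)
  then have "x \<in> C" using equiv_class_self[OF assms(1)] by simp
  then have rep: "(SOME x. x \<in> C) \<in> C" by (rule someI)
  then show "(SOME x. x \<in> C) \<in> A" using in_quotient_imp_subset[OF assms] by blast
  have "(x, SOME x. x \<in> C) \<in> r" using rep x(2) by blast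
  then show "C = r `` {SOME x. x \<in> C}" using x(2) equiv_class_eq[OF assms(1)] by (metis (no_types))
qed

lemma L_act_rep:
  assumes respects: "\<And>x y. (x, y) \<in> greenL M \<Longrightarrow> G x = G y"
    and "C \<in> carrier M // greenL M" "m \<in> carrier M" "monoid M"
  shows "G (SOME x. x \<in> L_act M C m) = G ((SOME x. x \<in> C) \<otimes>\<^bsub>M\<^esub> m)"
proof -
  let ?x = "SOME x. x \<in> C" and ?y = "SOME y. y \<in> L_act M C m"
  have xm: "?x \<otimes>\<^bsub>M\<^esub> m \<in> carrier M"
    using quotient_rep(1)[OF equiv_greenL assms(2)] assms(3,4) by (simp add: monoid.m_closed)
  have act_class: "L_act M C m = greenL M `` {?x \<otimes>\<^bsub>M\<^esub> m}" by (simp add: L_act_def)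
  then have "L_act M C m \<in> carrier M // greenL M" using xm by (simp add: quotientI)
  note y = quotient_rep[OF equiv_greenL this]
  have "greenL M `` {?x \<otimes>\<^bsub>M\<^esub> m} = greenL M `` {?y}" using trans[OF act_class[symmetric] y(2)] .
  then have "(?x \<otimes>\<^bsub>M\<^esub> m, ?y) \<in> greenL M"
    using eq_equiv_class_iff[OF equiv_greenL xm y(1)] by simp
  then show ?thesis by (simp add: respects)
qed

lemma L_classes_resfin:
  assumes M: "monoid M" "regular_monoid M" "residually_finite M"
  shows "right_action_resfin M (carrier M // greenL M) (L_act M)"
proof (rule right_action_resfin_intro)
  fix C1 C2 assume C: "C1 \<in> carrier M // greenL M" "C2 \<in> carrier M // greenL M" "C1 \<noteq> C2"
  define rep where "rep C = (SOME x. x \<in> C)" for C :: "'a set"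
  have rep: "rep C \<in> carrier M" "C = greenL M `` {rep C}" if "C \<in> carrier M // greenL M" for C
    using quotient_rep[OF equiv_greenL that] by (simp_all add: rep_def)
  have not_L: "(rep C1, rep C2) \<notin> greenL M"
    using C rep by (metis equiv_class_eq equiv_greenL)
  obtain N :: "nat monoid" and \<phi> where N: "monoid N" "finite (carrier N)" "\<phi> \<in> monoid_hom M N"
    and differ: "ideal_image M \<phi> (rep C1) \<noteq> ideal_image M \<phi> (rep C2)"
    using separate_non_greenL[OF M rep(1)[OF C(1)] rep(1)[OF C(2)] not_L] by (elim exE conjE)
  define f where "f C = ideal_image M \<phi> (rep C)" for C
  have "f \<in> carrier M // greenL M \<rightarrow> Pow (carrier N)"
    using ideal_image_subset[OF M(1) N(3)] rep(1) by (auto simp: f_def)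
  moreover have "f (L_act M C m) = translate N \<phi> (f C) m"
    if "C \<in> carrier M // greenL M" "m \<in> carrier M" for C m
  proof -
    have "f (L_act M C m) = ideal_image M \<phi> (rep C \<otimes>\<^bsub>M\<^esub> m)"
      using L_act_rep[OF ideal_image_greenL that M(1)] by (simp add: f_def rep_def)
    then show ?thesis using ideal_image_mult[OF M(1) N(1,3) rep(1)[OF that(1)] that(2)]
      by (simp add: f_def)
  qed
  moreover have "f C1 \<noteq> f C2" using differ by (simp add: f_def)
  moreover have "finite (Pow (carrier N))" using N(2) by simp
  ultimately show "\<exists>(Y :: nat set set) b f. finite Y \<and> right_action M Y b \<and>
      f \<in> carrier M // greenL M \<rightarrow> Y \<and>
      (\<forall>z\<in>carrier M // greenL M. \<forall>m\<in>carrier M. f (L_act M z m) = b (f z) m) \<and> f C1 \<noteq> f C2"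
    using translate_right_action[OF M(1) N(1,3)] by blast
qed

lemma L_separating_congruence:
  assumes M: "monoid M" "regular_monoid M" "residually_finite M"
    and st: "s \<in> carrier M" "t \<in> carrier M" "(s, t) \<notin> greenL M"
  shows "\<exists>\<rho>. right_congruence M \<rho> \<and> finite_index M \<rho> \<and> greenL M \<subseteq> \<rho> \<and> (s, t) \<notin> \<rho>"
proof -
  obtain N :: "nat monoid" and \<phi> where N: "monoid N" "finite (carrier N)" "\<phi> \<in> monoid_hom M N"
    and differ: "ideal_image M \<phi> s \<noteq> ideal_image M \<phi> t"
    using separate_non_greenL[OF M st] by blast
  let ?\<rho> = "map_kernel M (ideal_image M \<phi>)"
  have "right_congruence M ?\<rho>"
    using map_kernel_right_congruence[where act = "translate N \<phi>", OF M(1) ideal_image_mult[OF M(1) N(1,3)]] .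
  moreover have "finite_index M ?\<rho>"
    using map_kernel_finite_index[of "ideal_image M \<phi>" M "Pow (carrier N)"]
      ideal_image_subset[OF M(1) N(3)] N(2) by blast
  moreover have "greenL M \<subseteq> ?\<rho>"
  proof (rule subrelI)
    fix x y assume xy: "(x, y) \<in> greenL M"
    then have "x \<in> carrier M" "y \<in> carrier M" by (simp_all add: greenL_iff)
    then show "(x, y) \<in> ?\<rho>" using ideal_image_greenL[OF xy] by (simp add: map_kernel_def)
  qed
  ultimately show ?thesis using differ by (auto simp: map_kernel_def)
qed

definition opp :: "('a, 'b) monoid_scheme \<Rightarrow> 'a monoid" where
  "opp M = \<lparr>carrier = carrier M, mult = (\<lambda>x y. y \<otimes>\<^bsub>M\<^esub> x), one = \<one>\<^bsub>M\<^esub>\<rparr>"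

lemma opp_simps [simp]:
  "carrier (opp M) = carrier M" "x \<otimes>\<^bsub>opp M\<^esub> y = y \<otimes>\<^bsub>M\<^esub> x" "\<one>\<^bsub>opp M\<^esub> = \<one>\<^bsub>M\<^esub>"
  by (simp_all add: opp_def)

lemma opp_monoid: "monoid M \<Longrightarrow> monoid (opp M)"
  by unfold_locales (auto simp: monoid.m_assoc monoid.m_closed)

lemma opp_regular: "monoid M \<Longrightarrow> regular_monoid M \<Longrightarrow> regular_monoid (opp M)"
  unfolding regular_monoid_def by (simp add: monoid.m_assoc)

lemma opp_monoid_hom: "f \<in> monoid_hom M N \<Longrightarrow> f \<in> monoid_hom (opp M) (opp N)"
  by (auto simp: monoid_hom_def hom_def)

lemma opp_residually_finite: "residually_finite M \<Longrightarrow> residually_finite (opp M)"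
  unfolding residually_finite_def by simp (metis opp_monoid_hom opp_monoid opp_simps(1))

lemma opp_greenL: "greenL (opp M) = greenR M"
  by (simp add: greenL_def greenR_def)

lemma opp_L_act: "L_act (opp M) = (\<lambda>C m. R_act M m C)"
  by (simp add: fun_eq_iff L_act_def R_act_def opp_greenL)

lemma opp_right_action_resfin:
  fixes M :: "('a, 'b) monoid_scheme"
  assumes resfin: "right_action_resfin (opp M) X (\<lambda>x m. act m x)"
  shows "left_action_resfin M X act"
  unfolding left_action_resfin_def
proof (intro ballI impI)
  fix x y assume xy: "x \<in> X" "y \<in> X" "x \<noteq> y"
  obtain Y :: "nat set" and b :: "nat \<Rightarrow> 'a \<Rightarrow> nat" and f where
    Y: "finite Y" "right_action (opp M) Y b" "f \<in> X \<rightarrow> Y"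
      "\<forall>z\<in>X. \<forall>m\<in>carrier M. f (act m z) = b (f z) m" "f x \<noteq> f y"
    using resfin[unfolded right_action_resfin_def opp_simps, rule_format, OF xy] by blast
  have "left_action M Y (\<lambda>m y. b y m)"
    using Y(2) by (simp add: right_action_def left_action_def)
  then show "\<exists>(Y :: nat set) (b :: 'a \<Rightarrow> nat \<Rightarrow> nat) f. finite Y \<and> left_action M Y b \<and>
      f \<in> X \<rightarrow> Y \<and> (\<forall>z\<in>X. \<forall>m\<in>carrier M. f (act m z) = b m (f z)) \<and> f x \<noteq> f y"
    using Y by blast
qed

lemma opp_right_congruence: "right_congruence (opp M) \<rho> = left_congruence M \<rho>"
  by (simp add: right_congruence_def left_congruence_def)

lemma opp_finite_index: "finite_index (opp M) \<rho> = finite_index M \<rho>"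
  by (simp add: finite_index_def)

theorem mainTheorem2:
  fixes M :: "('a, 'b) monoid_scheme"
  assumes "monoid M" and "regular_monoid M" and "residually_finite M"
  shows "right_action_resfin M (carrier M // greenL M) (L_act M)
       \<and> left_action_resfin M (carrier M // greenR M) (R_act M)
       \<and> (\<forall>s\<in>carrier M. \<forall>t\<in>carrier M. (s, t) \<notin> greenL M \<longrightarrow>
            (\<exists>\<rho>. right_congruence M \<rho> \<and> finite_index M \<rho> \<and> greenL M \<subseteq> \<rho> \<and> (s, t) \<notin> \<rho>))
       \<and> (\<forall>s\<in>carrier M. \<forall>t\<in>carrier M. (s, t) \<notin> greenR M \<longrightarrow>
            (\<exists>\<rho>. left_congruence M \<rho> \<and> finite_index M \<rho> \<and> greenR M \<subseteq> \<rho> \<and> (s, t) \<notin> \<rho>))"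
proof -
  have opp: "monoid (opp M)" "regular_monoid (opp M)" "residually_finite (opp M)"
    using assms by (simp_all add: opp_monoid opp_regular opp_residually_finite)
  have "left_action_resfin M (carrier M // greenR M) (R_act M)"
    using L_classes_resfin[OF opp]
    by (intro opp_right_action_resfin) (simp add: opp_greenL opp_L_act)
  moreover have "\<forall>s\<in>carrier M. \<forall>t\<in>carrier M. (s, t) \<notin> greenR M \<longrightarrow>
      (\<exists>\<rho>. left_congruence M \<rho> \<and> finite_index M \<rho> \<and> greenR M \<subseteq> \<rho> \<and> (s, t) \<notin> \<rho>)"
    using L_separating_congruence[OF opp]
    by (simp add: opp_greenL opp_right_congruence opp_finite_index)
  ultimately show ?thesis
    using L_classes_resfin[OF assms] L_separating_congruence[OF assms] by blast
qed

end
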